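(* There is a set $S$ and a scenario $f\in{}^{\mathbb{R}}S$ such that for every $T_3$-anonymous predictor $P:{}^{\mathbb{R}}S\to{}^{\mathbb{R}}S$, the set $\{x\in\mathbb{R}: P(f)(x)=f(x)\}$ is countable.
   Context: For a set $S$, ${}^{\mathbb{R}}S$ is the set of all functions (scenarios) $f:\mathbb{R}\to S$. A predictor is a function $P:{}^{\mathbb{R}}S\to{}^{\mathbb{R}}S$ such that for all $f,g\in{}^{\mathbb{R}}S$ and $x\in\mathbb{R}$, if $f\upharpoonright(-\infty,x)=g\upharpoonright(-\infty,x)$ then $P(f)(x)=P(g)(x)$. For a family $T$ of functions $\mathbb{R}\to\mathbb{R}$, $P$ is $T$-anonymous if $P(f\circ t)=P(f)\circ t$ for all scenarios $f$ and all $t\in T$. $T_3$ is the set of all infinitely differentiable strictly increasing bijections $\mathbb{R}\to\mathbb{R}$. *)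

theory Defs
  imports "HOL-Analysis.Analysis"
begin

definition scenario :: "'a set \<Rightarrow> (real \<Rightarrow> 'a) \<Rightarrow> bool" where
  "scenario S f \<longleftrightarrow> (\<forall>x. f x \<in> S)"

definition predictor :: "'a set \<Rightarrow> ((real \<Rightarrow> 'a) \<Rightarrow> (real \<Rightarrow> 'a)) \<Rightarrow> bool" where
  "predictor S P \<longleftrightarrow>
     (\<forall>f. scenario S f \<longrightarrow> scenario S (P f)) \<and>
     (\<forall>f g x. scenario S f \<longrightarrow> scenario S g \<longrightarrow> (\<forall>y<x. f y = g y) \<longrightarrow> P f x = P g x)"

definition anonymous :: "'a set \<Rightarrow> (real \<Rightarrow> real) set \<Rightarrow> ((real \<Rightarrow> 'a) \<Rightarrow> (real \<Rightarrow> 'a)) \<Rightarrow> bool" where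
  "anonymous S T P \<longleftrightarrow> (\<forall>f t. scenario S f \<longrightarrow> t \<in> T \<longrightarrow> P (f \<circ> t) = P f \<circ> t)"

definition smooth :: "(real \<Rightarrow> real) \<Rightarrow> bool" where
  "smooth t \<longleftrightarrow> (\<forall>n x. ((deriv ^^ n) t) differentiable (at x))"

definition T3 :: "(real \<Rightarrow> real) set" where
  "T3 = {t. smooth t \<and> strict_mono t \<and> bij t}"

end

theory Submission
  imports Defs "HOL-Computational_Algebra.Polynomial"
begin

text \<open>
  If \<open>t \<in> T3\<close> maps \<open>x'\<close> to \<open>x\<close> and satisfies \<open>f (t y) = f y\<close> for all \<open>y < x'\<close>, then
  \<open>P f x = (P f \<circ> t) x' = P (f \<circ> t) x' = P f x'\<close> for every \<open>T3\<close>-anonymous predictor \<open>P\<close>.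
  Call \<open>y\<close> and \<open>z\<close> related if \<open>z = y + q + \<Sum> d\<^sub>i \<psi>(y - a\<^sub>i)\<close> for a finite sum with rational
  \<open>q\<close>, \<open>d\<^sub>i \<ge> 0\<close>, \<open>a\<^sub>i\<close>, where \<open>\<psi>(s) = exp(-1/s)\<close> for \<open>s > 0\<close> and \<open>\<psi>(s) = 0\<close> otherwise.
  These maps are countably many and injective, so the generated equivalence has countable
  classes; let \<open>f\<close> send each point to its class. Given \<open>x, x'\<close>, take rationals \<open>a\<^sub>n \<nearrow> x'\<close> and
  choose rationals \<open>d\<^sub>n \<ge> 0\<close> greedily so that \<open>t y = y + q + \<Sum>\<^sub>n d\<^sub>n \<psi>(y - a\<^sub>n)\<close> hits
  \<open>t x' = x\<close>; \<open>t\<close> is smooth, increasing and onto, and below \<open>x'\<close> the sum is finite, so \<open>t y\<close>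
  is related to \<open>y\<close>. Hence \<open>P f\<close> is constant, and it agrees with \<open>f\<close> only on one class.
\<close>

definition psi :: "real \<Rightarrow> real" where
  "psi s = (if s > 0 then exp (- 1 / s) else 0)"

text \<open>The \<open>k\<close>-th derivative of \<open>psi\<close> is \<open>p\<^sub>k(1/s) exp(-1/s)\<close> for \<open>s > 0\<close>.\<close>
fun psi_poly :: "nat \<Rightarrow> real poly" where
  "psi_poly 0 = 1"
| "psi_poly (Suc k) = [:0, 0, 1:] * (psi_poly k - pderiv (psi_poly k))"

definition psi_deriv :: "nat \<Rightarrow> real \<Rightarrow> real" where
  "psi_deriv k s = (if s > 0 then poly (psi_poly k) (1 / s) * exp (- 1 / s) else 0)"

lemma psi_deriv_0 [simp]: "psi_deriv 0 = psi"
  by (auto simp: psi_deriv_def psi_def fun_eq_iff)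

lemma psi_nonneg: "0 \<le> psi s"
  by (simp add: psi_def)

lemma psi_le_1: "psi s \<le> 1"
  by (simp add: psi_def)

lemma psi_pos: "0 < s \<Longrightarrow> 0 < psi s"
  by (simp add: psi_def)

lemma psi_eq_0: "s \<le> 0 \<Longrightarrow> psi s = 0"
  by (simp add: psi_def)

lemma psi_mono: "s \<le> s' \<Longrightarrow> psi s \<le> psi s'"
  by (auto simp: psi_def divide_simps)

lemma tendsto_poly_mult_exp_neg_at_top:
  "((\<lambda>u::real. poly p u * exp (- u)) \<longlongrightarrow> 0) at_top"
proof -
  have "((\<lambda>u::real. \<Sum>i\<le>degree p. coeff p i * (u ^ i / exp u)) \<longlongrightarrow> (\<Sum>i\<le>degree p. coeff p i * 0)) at_top"
    by (intro tendsto_sum tendsto_mult tendsto_const tendsto_power_div_exp_0)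
  moreover have "(\<lambda>u::real. poly p u * exp (- u)) = (\<lambda>u. \<Sum>i\<le>degree p. coeff p i * (u ^ i / exp u))"
    by (simp add: fun_eq_iff poly_altdef exp_minus sum_divide_distrib[symmetric] field_simps)
  ultimately show ?thesis
    by simp
qed

lemma psi_deriv_has_derivative_pos:
  assumes "0 < s"
  shows "(psi_deriv k has_real_derivative psi_deriv (Suc k) s) (at s)"
proof -
  have "((\<lambda>s. poly (psi_poly k) (1 / s) * exp (- 1 / s)) has_real_derivative
      poly (pderiv (psi_poly k)) (1 / s) * (- inverse (s\<^sup>2)) * exp (- 1 / s)
        + poly (psi_poly k) (1 / s) * (exp (- 1 / s) * inverse (s\<^sup>2))) (at s)"
    using assms
    by (auto intro!: derivative_eq_intros DERIV_chain2[OF poly_DERIV] simp: power2_eq_square field_simps)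
  also have "poly (pderiv (psi_poly k)) (1 / s) * (- inverse (s\<^sup>2)) * exp (- 1 / s)
        + poly (psi_poly k) (1 / s) * (exp (- 1 / s) * inverse (s\<^sup>2)) = psi_deriv (Suc k) s"
    using assms by (simp add: psi_deriv_def power2_eq_square field_simps)
  finally show ?thesis
    by (rule has_field_derivative_transform_within_open[where S = "{0<..}"]) (use assms in \<open>auto simp: psi_deriv_def\<close>)
qed

lemma psi_deriv_has_derivative_0: "(psi_deriv k has_real_derivative psi_deriv (Suc k) 0) (at 0)"
proof -
  \<comment> \<open>Flatness at 0: for \<open>y > 0\<close> the difference quotient is again a polynomial in \<open>1/y\<close>
    times \<open>exp(-1/y)\<close>.\<close>
  have "((\<lambda>y. psi_deriv k y / y) \<longlongrightarrow> 0) (at_left 0)"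
    by (rule tendsto_eventually, rule eventually_mono[OF eventually_at_left_real[of "-1" 0]])
      (auto simp: psi_deriv_def)
  moreover have "((\<lambda>y. psi_deriv k y / y) \<longlongrightarrow> 0) (at_right 0)"
  proof (rule Lim_transform_eventually)
    show "((\<lambda>y. (\<lambda>u. poly ([:0, 1:] * psi_poly k) u * exp (- u)) (inverse y)) \<longlongrightarrow> 0) (at_right 0)"
      by (rule filterlim_compose[OF tendsto_poly_mult_exp_neg_at_top filterlim_inverse_at_top_right])
    show "\<forall>\<^sub>F y in at_right 0. poly ([:0, 1:] * psi_poly k) (inverse y) * exp (- inverse y) = psi_deriv k y / y"
      by (rule eventually_mono[OF eventually_at_right_real[of 0 1]]) (auto simp: psi_deriv_def field_simps)
  qed
  ultimately have "((\<lambda>y. psi_deriv k y / y) \<longlongrightarrow> 0) (at 0)"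
    by (rule filterlim_split_at)
  then show ?thesis
    by (simp add: has_field_derivative_iff psi_deriv_def)
qed

lemma psi_deriv_has_derivative: "(psi_deriv k has_real_derivative psi_deriv (Suc k) s) (at s)"
proof (cases s "0 :: real" rule: linorder_cases)
  case less
  then have "psi_deriv (Suc k) s = 0"
    by (simp add: psi_deriv_def)
  with less show ?thesis
    using has_field_derivative_transform_within_open[of "\<lambda>_. 0" 0 s "{..<0}" "psi_deriv k"]
    by (auto simp: psi_deriv_def)
next
  case equal
  then show ?thesis
    using psi_deriv_has_derivative_0 by simp
next
  case greater
  then show ?thesis
    by (rule psi_deriv_has_derivative_pos)
qed

lemma psi_deriv_bounded: "\<exists>B. \<forall>u. \<bar>u\<bar> \<le> R \<longrightarrow> \<bar>psi_deriv k u\<bar> \<le> B"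
proof -
  have "continuous_on (cball 0 R) (psi_deriv k)"
    by (meson DERIV_isCont continuous_at_imp_continuous_on psi_deriv_has_derivative)
  then have "bounded (psi_deriv k ` cball 0 R)"
    by (intro compact_imp_bounded compact_continuous_image) auto
  then obtain B where "\<forall>v \<in> psi_deriv k ` cball 0 R. norm v \<le> B"
    using bounded_iff by metis
  then have "\<forall>u. \<bar>u\<bar> \<le> R \<longrightarrow> \<bar>psi_deriv k u\<bar> \<le> B"
    by (auto simp: dist_norm)
  then show ?thesis ..
qed

lemma smooth_if_derivative_sequence:
  assumes "D 0 = g" and "\<And>k x. (D k has_real_derivative D (Suc k) x) (at x)"
  shows "smooth g"
proof -
  have "(deriv ^^ n) g = D n" for n
  proof (induction n)
    case (Suc n)
    have "deriv (D n) = D (Suc n)"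
      using assms(2) by (auto simp: fun_eq_iff intro: DERIV_imp_deriv)
    then show ?case
      by (simp add: Suc.IH)
  qed (simp add: assms(1))
  then show ?thesis
    unfolding smooth_def using assms(2) real_differentiable_def by metis
qed

definition psi_series :: "(nat \<Rightarrow> real) \<Rightarrow> (nat \<Rightarrow> real) \<Rightarrow> nat \<Rightarrow> real \<Rightarrow> real" where
  "psi_series d a k y = (\<Sum>n. d n * psi_deriv k (y - a n))"

lemma psi_series_has_derivative:
  assumes d: "summable (\<lambda>n. \<bar>d n\<bar>)" and a: "\<And>n. \<bar>a n\<bar> \<le> K"
  shows "summable (\<lambda>n. d n * psi_deriv k (y - a n))"
    and "(psi_series d a k has_real_derivative psi_series d a (Suc k) y) (at y)"
proof -
  let ?R = "\<bar>y\<bar> + 1 + K"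
  have near: "\<bar>z - a n\<bar> \<le> ?R" if "z \<in> ball y 1" for z n
    using that a[of n] by (auto simp: dist_real_def)
  have majorant: "norm (d n * psi_deriv j (z - a n)) \<le> \<bar>d n\<bar> * B"
    if "\<And>u. \<bar>u\<bar> \<le> ?R \<Longrightarrow> \<bar>psi_deriv j u\<bar> \<le> B" "z \<in> ball y 1" for j z n B
    using that near by (auto simp: abs_mult intro: mult_left_mono)
  have summable_majorant: "summable (\<lambda>n. \<bar>d n\<bar> * B)" for B
    using d by (rule summable_mult2)
  obtain B0 where B0: "\<And>u. \<bar>u\<bar> \<le> ?R \<Longrightarrow> \<bar>psi_deriv k u\<bar> \<le> B0"
    using psi_deriv_bounded by blast
  obtain B1 where B1: "\<And>u. \<bar>u\<bar> \<le> ?R \<Longrightarrow> \<bar>psi_deriv (Suc k) u\<bar> \<le> B1"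
    using psi_deriv_bounded by blast
  show summable: "summable (\<lambda>n. d n * psi_deriv k (y - a n))"
    by (rule summable_comparison_test'[OF summable_majorant[of B0], where N = 0])
      (use majorant[OF B0, of y] in simp)
  have "((\<lambda>z. psi_deriv k (z - a n)) has_field_derivative psi_deriv (Suc k) (z - a n)) (at z)"
    for n z
    using DERIV_shift[of "psi_deriv k" _ z "- a n", THEN iffD1, OF psi_deriv_has_derivative]
    by simp
  then have term_derivative: "((\<lambda>z. d n * psi_deriv k (z - a n)) has_field_derivative
      d n * psi_deriv (Suc k) (z - a n)) (at z within ball y 1)" for n z
    by (rule has_field_derivative_at_within[OF DERIV_cmult])
  have uniform: "uniformly_convergent_on (ball y 1) (\<lambda>n z. \<Sum>i<n. d i * psi_deriv (Suc k) (z - a i))"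
    by (rule Weierstrass_m_test'[OF _ summable_majorant[of B1]]) (rule majorant[OF B1])
  show "(psi_series d a k has_real_derivative psi_series d a (Suc k) y) (at y)"
    unfolding psi_series_def[abs_def]
    by (rule has_field_derivative_series'(2)[OF convex_ball term_derivative uniform _ summable]) simp_all
qed

definition psi_shift :: "real \<Rightarrow> (nat \<Rightarrow> real) \<Rightarrow> (nat \<Rightarrow> real) \<Rightarrow> real \<Rightarrow> real" where
  "psi_shift c d a y = y + c + psi_series d a 0 y"

lemma smooth_psi_shift:
  assumes "summable (\<lambda>n. \<bar>d n\<bar>)" and "\<And>n. \<bar>a n\<bar> \<le> K"
  shows "smooth (psi_shift c d a)"
proof -
  define D where "D k y = (if k = 0 then y + c else if k = 1 then 1 else 0) + psi_series d a k y"
    for k y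
  have "((\<lambda>y. if k = 0 then y + c else if k = 1 then 1 else 0) has_real_derivative
      (if Suc k = 0 then y + c else if Suc k = 1 then 1 else 0)) (at y)" for k y
    by (cases k) (auto intro!: derivative_eq_intros)
  then have "(D k has_real_derivative D (Suc k) y) (at y)" for k y
    unfolding D_def[abs_def] by (rule DERIV_add[OF _ psi_series_has_derivative(2)[OF assms]])
  moreover have "D 0 = psi_shift c d a"
    by (simp add: D_def psi_shift_def fun_eq_iff)
  ultimately show ?thesis
    by (intro smooth_if_derivative_sequence[of D]) auto
qed

lemma summable_psi_terms:
  assumes "summable d" and "\<And>n. 0 \<le> d n"
  shows "summable (\<lambda>n. d n * psi (y - a n))"
  using assms by (intro summable_comparison_test'[OF assms(1), where N = 0])
    (auto simp: abs_mult psi_nonneg psi_le_1 intro: mult_left_le)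

lemma psi_series_bounds:
  assumes "summable d" and "\<And>n. 0 \<le> d n"
  shows "0 \<le> psi_series d a 0 y" and "psi_series d a 0 y \<le> suminf d"
  unfolding psi_series_def using assms
  by (auto intro!: suminf_nonneg suminf_le summable_psi_terms simp: psi_nonneg psi_le_1 mult_left_le)

lemma strict_mono_psi_shift:
  assumes "summable d" and "\<And>n. 0 \<le> d n"
  shows "strict_mono (psi_shift c d a)"
proof (rule strict_monoI)
  fix y z :: real
  assume "y < z"
  then have "psi_series d a 0 y \<le> psi_series d a 0 z"
    unfolding psi_series_def using assms
    by (auto intro!: suminf_le summable_psi_terms mult_left_mono psi_mono)
  with \<open>y < z\<close> show "psi_shift c d a y < psi_shift c d a z"
    by (simp add: psi_shift_def)
qed

lemma surj_if_continuous_bounded_displacement: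
  fixes f :: "real \<Rightarrow> real"
  assumes cont: "continuous_on UNIV f"
    and lower: "\<And>y. y + c \<le> f y" and upper: "\<And>y. f y \<le> y + C"
  shows "surj f"
proof (unfold surj_def, intro allI)
  fix z
  have "f (z - C) \<le> z" and "z \<le> f (z - c)"
    using upper[of "z - C"] lower[of "z - c"] by simp_all
  moreover have "z - C \<le> z - c"
    using lower[of 0] upper[of 0] by simp
  ultimately obtain y where "f y = z"
    using IVT'[of f] continuous_on_subset[OF cont] by blast
  then show "\<exists>y. z = f y"
    by metis
qed

lemma psi_shift_in_T3:
  assumes "summable d" and "\<And>n. 0 \<le> d n" and "\<And>n. \<bar>a n\<bar> \<le> K"
  shows "psi_shift c d a \<in> T3"
proof -
  let ?t = "psi_shift c d a"
  have "summable (\<lambda>n. \<bar>d n\<bar>)"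
    using assms(1,2) by simp
  then have smooth: "smooth ?t"
    using assms(3) by (rule smooth_psi_shift)
  then have "continuous_on UNIV ?t"
    unfolding smooth_def
    by (metis continuous_at_imp_continuous_on differentiable_imp_continuous_within funpow_0)
  moreover have "y + c \<le> ?t y" and "?t y \<le> y + (c + suminf d)" for y
    using psi_series_bounds[OF assms(1,2)] by (auto simp: psi_shift_def)
  ultimately have "surj ?t"
    by (rule surj_if_continuous_bounded_displacement)
  with smooth strict_mono_psi_shift[OF assms(1,2)] show ?thesis
    by (simp add: T3_def bij_def strict_mono_imp_inj_on)
qed

definition rat_psi_shift :: "rat \<Rightarrow> (rat \<times> rat) list \<Rightarrow> real \<Rightarrow> real" where
  "rat_psi_shift q ps y = y + of_rat q + (\<Sum>p\<leftarrow>ps. of_rat (fst p) * psi (y - of_rat (snd p)))"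

definition psi_related :: "real \<Rightarrow> real \<Rightarrow> bool" where
  "psi_related y z \<longleftrightarrow> (\<exists>q ps. (\<forall>p\<in>set ps. 0 \<le> fst p) \<and> z = rat_psi_shift q ps y)"

lemma strict_mono_rat_psi_shift:
  assumes "\<forall>p\<in>set ps. 0 \<le> fst p"
  shows "strict_mono (rat_psi_shift q ps)"
proof (rule strict_monoI)
  fix y z :: real
  assume "y < z"
  then have "(\<Sum>p\<leftarrow>ps. of_rat (fst p) * psi (y - of_rat (snd p)))
      \<le> (\<Sum>p\<leftarrow>ps. of_rat (fst p) * psi (z - of_rat (snd p)))"
    using assms by (intro sum_list_mono) (auto intro!: mult_left_mono psi_mono)
  with \<open>y < z\<close> show "rat_psi_shift q ps y < rat_psi_shift q ps z"
    by (simp add: rat_psi_shift_def)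
qed

lemma countable_psi_related_image: "countable {z. psi_related y z}"
proof -
  have "{z. psi_related y z} \<subseteq> (\<lambda>(q, ps). rat_psi_shift q ps y) ` UNIV"
    by (auto simp: psi_related_def)
  then show ?thesis
    by (rule countable_subset) simp
qed

lemma countable_psi_related_preimage: "countable {y. psi_related y z}"
proof -
  let ?params = "{(q, ps). \<forall>p\<in>set ps. 0 \<le> fst p} :: (rat \<times> (rat \<times> rat) list) set"
  have preimage: "{y. psi_related y z} = (\<Union>(q, ps)\<in>?params. rat_psi_shift q ps -` {z})"
    by (auto simp: psi_related_def)
  have fibre: "countable (rat_psi_shift q ps -` {z})" if "(q, ps) \<in> ?params" for q ps
    using that strict_mono_rat_psi_shift[of ps q]
    by (intro countable_finite finite_vimageI) (auto intro: strict_mono_imp_inj_on)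
  have "countable ?params"
    by (rule countable_subset[OF subset_UNIV]) simp
  then show ?thesis
    unfolding preimage by (rule countable_UN) (use fibre in auto)
qed

definition psi_equiv :: "real rel" where
  "psi_equiv = {(y, z). psi_related y z \<or> psi_related z y}\<^sup>*"

lemma equiv_psi_equiv: "equiv UNIV psi_equiv"
proof -
  have "sym {(y, z). psi_related y z \<or> psi_related z y}"
    by (auto simp: sym_def)
  then show ?thesis
    unfolding psi_equiv_def equiv_def by (simp add: refl_rtrancl sym_rtrancl trans_rtrancl)
qed

lemma countable_psi_equiv_class: "countable (psi_equiv `` {y})"
proof -
  let ?R = "{(y, z). psi_related y z \<or> psi_related z y}"
  have "?R `` {y} = {z. psi_related y z} \<union> {z. psi_related z y}" for y
    by auto
  then have "countable (?R `` {y})" for y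
    by (simp add: countable_psi_related_image countable_psi_related_preimage)
  then have "countable (?R `` Y)" if "countable Y" for Y
    using that by (rule countable_Image)
  from countable_rtrancl[OF this, of "{y}"] show ?thesis
    unfolding psi_equiv_def by simp
qed

text \<open>Scenario values are real functions, so each class is encoded by its indicator function.\<close>
definition psi_class :: "real \<Rightarrow> real \<Rightarrow> real" where
  "psi_class y = indicator (psi_equiv `` {y})"

lemma psi_class_eq_iff: "psi_class y = psi_class z \<longleftrightarrow> (y, z) \<in> psi_equiv"
proof -
  have "indicator A = (indicator B :: real \<Rightarrow> real) \<longleftrightarrow> A = B" for A B :: "real set"
    by (auto simp: fun_eq_iff indicator_def)
  then show ?thesis
    unfolding psi_class_def using eq_equiv_class_iff[OF equiv_psi_equiv] by simp
qed

lemma psi_class_related: "psi_related y z \<Longrightarrow> psi_class z = psi_class y"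
  unfolding psi_class_eq_iff psi_equiv_def by (simp add: r_into_rtrancl)

lemma psi_related_psi_shift:
  assumes "\<forall>\<^sub>F n in sequentially. y \<le> of_rat (a n)" and "\<And>n. 0 \<le> d n"
  shows "psi_related y (psi_shift (of_rat c) (\<lambda>n. of_rat (d n)) (\<lambda>n. of_rat (a n)) y)"
proof -
  obtain M where M: "\<And>n. M \<le> n \<Longrightarrow> y \<le> of_rat (a n)"
    using assms(1) by (auto simp: eventually_sequentially)
  let ?ps = "map (\<lambda>n. (d n, a n)) [0..<M]"
  have "psi_series (\<lambda>n. of_rat (d n)) (\<lambda>n. of_rat (a n)) 0 y
      = (\<Sum>n<M. of_rat (d n) * psi (y - of_rat (a n)))"
    unfolding psi_series_def psi_deriv_0
    by (rule suminf_finite) (auto simp: psi_eq_0 M not_less)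
  also have "\<dots> = (\<Sum>p\<leftarrow>?ps. of_rat (fst p) * psi (y - of_rat (snd p)))"
    by (simp add: sum_list_sum_nth atLeast0LessThan)
  finally have "psi_shift (of_rat c) (\<lambda>n. of_rat (d n)) (\<lambda>n. of_rat (a n)) y = rat_psi_shift c ?ps y"
    by (simp add: psi_shift_def rat_psi_shift_def)
  moreover have "\<forall>p\<in>set ?ps. 0 \<le> fst p"
    using assms(2) by auto
  ultimately show ?thesis
    unfolding psi_related_def by blast
qed

lemma exists_rat_multiple_below:
  fixes e w \<epsilon> :: real
  assumes "0 \<le> e" and "0 < w" and "0 < \<epsilon>"
  shows "\<exists>\<delta>::rat. 0 \<le> \<delta> \<and> 0 \<le> e - of_rat \<delta> * w \<and> e - of_rat \<delta> * w \<le> \<epsilon>"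
proof (cases "e \<le> \<epsilon>")
  case True
  then show ?thesis
    using assms by (intro exI[of _ 0]) simp
next
  case False
  with assms have "0 < (e - \<epsilon>) / w" and "(e - \<epsilon>) / w < e / w"
    by (auto intro: divide_strict_right_mono)
  then obtain \<delta> :: rat where "(e - \<epsilon>) / w < of_rat \<delta>" and "of_rat \<delta> < e / w"
    using of_rat_dense by blast
  moreover from this \<open>0 < (e - \<epsilon>) / w\<close> have "0 \<le> \<delta>"
    by (metis less_trans order.strict_implies_order zero_less_of_rat_iff)
  ultimately show ?thesis
    using assms by (intro exI[of _ \<delta>]) (auto simp: field_simps)
qed

text \<open>Greedy expansion: at step \<open>n\<close> the remainder \<open>r n \<le> w n / 2\<^sup>n\<close> is reduced by a rational
  multiple of \<open>w n\<close> to at most \<open>w (Suc n) / 2\<^sup>n\<^sup>+\<^sup>1\<close>.\<close>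
lemma exists_rat_series_sums:
  fixes w :: "nat \<Rightarrow> real"
  assumes w: "\<And>n. 0 < w n" "\<And>n. w n \<le> 1" and D: "0 \<le> D" "D \<le> w 0"
  shows "\<exists>d::nat \<Rightarrow> rat. (\<forall>n. 0 \<le> d n \<and> of_rat (d n) \<le> (1 / 2 :: real) ^ n)
    \<and> (\<lambda>n. of_rat (d n) * w n) sums D"
proof -
  have "\<forall>n e. \<exists>\<delta>. 0 \<le> e \<longrightarrow>
      0 \<le> \<delta> \<and> 0 \<le> e - of_rat \<delta> * w n \<and> e - of_rat \<delta> * w n \<le> w (Suc n) / 2 ^ Suc n"
    using exists_rat_multiple_below w(1) by simp
  then obtain pick where pick: "\<And>n e. 0 \<le> e \<Longrightarrow> 0 \<le> pick n e \<and> 0 \<le> e - of_rat (pick n e) * w n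
      \<and> e - of_rat (pick n e) * w n \<le> w (Suc n) / 2 ^ Suc n"
    by metis
  define r where "r = rec_nat D (\<lambda>n e. e - of_rat (pick n e) * w n)"
  define d where "d n = pick n (r n)" for n
  have r_0: "r 0 = D" and r_Suc: "r (Suc n) = r n - of_rat (d n) * w n" for n
    by (simp_all add: r_def d_def)
  have r_bounds: "0 \<le> r n \<and> r n \<le> w n / 2 ^ n" for n
  proof (induction n)
    case (Suc n)
    then show ?case
      using pick[of "r n" n] by (simp add: r_Suc d_def)
  qed (use D in \<open>simp add: r_0\<close>)
  have d_nonneg: "0 \<le> d n" for n
    using pick r_bounds by (simp add: d_def)
  have "of_rat (d n) * w n \<le> (1 / 2) ^ n * w n" for n
    using pick[of "r n" n] r_bounds[of n] by (simp add: d_def power_one_over)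
  then have d_le: "of_rat (d n) \<le> (1 / 2 :: real) ^ n" for n
    using w(1) by (rule mult_right_le_imp_le)
  have "r n \<le> (1 / 2) ^ n" for n
  proof -
    have "w n / 2 ^ n \<le> 1 / 2 ^ n"
      using w(2) by (rule divide_right_mono) simp
    then show ?thesis
      using r_bounds[of n] by (simp add: power_one_over)
  qed
  then have "r \<longlonglongrightarrow> 0"
    using r_bounds
    by (intro tendsto_sandwich[of "\<lambda>_. 0" r sequentially "\<lambda>n. (1 / 2) ^ n"] always_eventually allI)
      (simp_all add: LIMSEQ_power_zero)
  then have "(\<lambda>n. D - r n) \<longlonglongrightarrow> D"
    using tendsto_diff[OF tendsto_const, of r 0 sequentially D] by simp
  moreover have "(\<Sum>i<n. of_rat (d i) * w i) = D - r n" for n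
    by (induction n) (simp_all add: r_0 r_Suc)
  ultimately have "(\<lambda>n. of_rat (d n) * w n) sums D"
    by (simp add: sums_def)
  with d_nonneg d_le show ?thesis
    by blast
qed

lemma exists_rat_seq_tendsto_from_below:
  fixes x :: real
  shows "\<exists>a::nat \<Rightarrow> rat. (\<forall>n. x - 1 < of_rat (a n) \<and> of_rat (a n) < x) \<and> (\<lambda>n. of_rat (a n)) \<longlonglongrightarrow> x"
proof -
  have "\<forall>n. \<exists>q::rat. x - inverse (real (Suc n)) < of_rat q \<and> of_rat q < x"
    by (intro allI of_rat_dense) simp
  then obtain a :: "nat \<Rightarrow> rat"
    where a: "\<And>n. x - inverse (real (Suc n)) < of_rat (a n)" "\<And>n. of_rat (a n) < x"
    by metis
  have "(\<lambda>n. of_rat (a n)) \<longlonglongrightarrow> x"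
  proof (rule tendsto_sandwich[where f = "\<lambda>n. x - inverse (real (Suc n))" and h = "\<lambda>_. x"])
    show "(\<lambda>n. x - inverse (real (Suc n))) \<longlonglongrightarrow> x"
      using tendsto_diff[OF tendsto_const LIMSEQ_inverse_real_of_nat, of x] by simp
  qed (use a in \<open>auto intro: always_eventually less_imp_le\<close>)
  moreover have "x - 1 < of_rat (a n)" for n
  proof -
    have "inverse (real (Suc n)) \<le> 1"
      by (rule inverse_le_1_iff[THEN iffD2]) simp
    with a(1)[of n] show ?thesis
      by linarith
  qed
  ultimately show ?thesis
    using a(2) by blast
qed

lemma exists_T3_psi_related_below:
  fixes x x' :: real
  shows "\<exists>t\<in>T3. t x' = x \<and> (\<forall>y<x'. psi_related y (t y))"
proof -
  obtain a :: "nat \<Rightarrow> rat" where a: "\<And>n. x' - 1 < of_rat (a n)" "\<And>n. of_rat (a n) < x'"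
    and a_lim: "(\<lambda>n. of_rat (a n)) \<longlonglongrightarrow> x'"
    using exists_rat_seq_tendsto_from_below[of x'] by blast
  have a_bounded: "\<bar>of_rat (a n)\<bar> \<le> \<bar>x'\<bar> + 1" for n
    using a[of n] by (simp only: abs_le_iff) linarith
  define w where "w n = psi (x' - of_rat (a n))" for n
  have w: "0 < w n" "w n \<le> 1" for n
    using a(2)[of n] by (simp_all add: w_def psi_pos psi_le_1)
  obtain c :: rat where c: "x - x' - w 0 < of_rat c" "of_rat c < x - x'"
    using of_rat_dense[of "x - x' - w 0" "x - x'"] w(1)[of 0] by auto
  obtain d :: "nat \<Rightarrow> rat" where d: "\<And>n. 0 \<le> d n" "\<And>n. of_rat (d n) \<le> (1 / 2 :: real) ^ n"
    and sums: "(\<lambda>n. of_rat (d n) * w n) sums (x - x' - of_rat c)"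
    using exists_rat_series_sums[of w "x - x' - of_rat c"] w c by auto
  define t where "t = psi_shift (of_rat c) (\<lambda>n. of_rat (d n)) (\<lambda>n. of_rat (a n))"
  have "summable (\<lambda>n. of_rat (d n) :: real)"
    using d by (intro summable_comparison_test'[OF summable_geometric[of "1 / 2"], where N = 0]) auto
  then have "t \<in> T3"
    unfolding t_def using d(1) a_bounded by (intro psi_shift_in_T3) auto
  moreover have "t x' = x"
    using sums_unique[OF sums] by (simp add: t_def psi_shift_def psi_series_def w_def)
  moreover have "psi_related y (t y)" if "y < x'" for y
    unfolding t_def
    using order_tendstoD(1)[OF a_lim that] d(1)
    by (intro psi_related_psi_shift) (auto elim: eventually_mono)
  ultimately show ?thesis
    by blast
qed

lemma countable_psi_class_fibre: "countable {x. psi_class x = g}"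
proof (cases "\<exists>x0. psi_class x0 = g")
  case True
  then obtain x0 where "psi_class x0 = g"
    by blast
  moreover have "psi_class x = psi_class x0 \<longleftrightarrow> (x0, x) \<in> psi_equiv" for x
    by (metis psi_class_eq_iff)
  ultimately have "{x. psi_class x = g} = psi_equiv `` {x0}"
    by auto
  then show ?thesis
    by (simp add: countable_psi_equiv_class)
qed simp

lemma anonymous_predictor_constant:
  assumes pred: "predictor S P" and anon: "anonymous S T P" and f: "scenario S f"
    and shift: "\<exists>t\<in>T. t x' = x \<and> (\<forall>y<x'. f (t y) = f y)"
  shows "P f x = P f x'"
proof -
  obtain t where t: "t \<in> T" "t x' = x" and agree: "\<forall>y<x'. (f \<circ> t) y = f y"
    using shift by auto
  have "scenario S (f \<circ> t)"
    using f by (simp add: scenario_def)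
  with pred f agree have "P (f \<circ> t) x' = P f x'"
    unfolding predictor_def by blast
  moreover have "P (f \<circ> t) = P f \<circ> t"
    using anon f t(1) by (simp add: anonymous_def)
  ultimately show ?thesis
    using t(2) by simp
qed

theorem theorem3:
  shows "\<exists>(S :: (real \<Rightarrow> real) set) f. scenario S f \<and>
           (\<forall>P. predictor S P \<and> anonymous S T3 P \<longrightarrow> countable {x. P f x = f x})"
proof (intro exI conjI allI impI)
  show "scenario (range psi_class) psi_class"
    by (simp add: scenario_def)
  fix P
  assume "predictor (range psi_class) P \<and> anonymous (range psi_class) T3 P"
  then have "P psi_class x = P psi_class 0" for x
    using exists_T3_psi_related_below[of 0 x] psi_class_related
    by (intro anonymous_predictor_constant[of "range psi_class" P T3]) (auto simp: scenario_def)
  then have "{x. P psi_class x = psi_class x} \<subseteq> {x. psi_class x = P psi_class 0}"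
    by (metis (mono_tags) mem_Collect_eq subsetI)
  then show "countable {x. P psi_class x = psi_class x}"
    using countable_psi_class_fibre countable_subset by blast
qed

end
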